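(* Let the setting and $W$, $QW$ be as in the context, and suppose $\mathfrak{g}$ is conformal with respect to $\nabla$ with conformal factor $\phi$. Let $\tilde\Pi_p^q$ denote parallel transport of the connection $\tilde\nabla_XY=\nabla_XY+X(\log\phi)Y$. Then for all $p,q\in\mathcal{M}$ and every $A\in\mathrm{Hom}(T_p\mathcal{M},\mathbb{R}^2)$, \[ W_p(A)=W_q(A\circ\tilde\Pi_q^p)\qquad\text{and}\qquad QW_p(A)=QW_q(A\circ\tilde\Pi_q^p). \]
   Context: Setting. $(\mathcal{M},\mathfrak{g})$ is a compact smooth two-dimensional Riemannian manifold which is a topological disc with smooth boundary, and $\nabla$ is a flat, symmetric (torsion-free) affine connection on $\mathcal{M}$. Let $\mathfrak{a},\mathfrak{b},\mathfrak{c}$ be $\nabla$-parallel vector fields with $\mathfrak{a}+\mathfrak{b}+\mathfrak{c}=0$, any two linearly independent at every point. Norms are taken with respect to $\mathfrak{g}$, and $\mathcal{M}$ is oriented so that $(\mathfrak{a},\mathfrak{b})$ is positive. Conformality. $\mathfrak{g}$ is conformal with respect to $\nabla$ if there is a positive function $\phi$ such that for all $\nabla$-parallel vector fields $\xi,\eta$ and all $p,q$, $\mathfrak{g}_p(\xi_p,\eta_p)/\phi^2(p)=\mathfrak{g}_q(\xi_q,\eta_q)/\phi^2(q)$. The functions $\Phi$ and $\Psi$. $\Phi:[0,\infty)\to[0,\infty)$ satisfies: - $\Phi(r)=0$ if and only if $r=1$; - $\Phi(r)\ge\alpha_\Phi(r-1)^2$; - $\Phi(r)\le C_\Phi(1+r^2)$;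 - $|\Phi(r)-\Phi(s)|\le L_\Phi(1+|r|+|s|)|r-s|$ for $r,s>0$. $\Psi:\mathbb{R}\to[0,\infty)$ satisfies: - $\Psi(a)=0$ if and only if $a=1$; - $\Psi(a)>\alpha_\Psi\sqrt{|a|}$ for $a<0$; - $\Psi(a)<C_\Psi(1+|a|)$; - $|\Psi(a)-\Psi(b)|\le L_\Psi|a-b|$. All constants are positive. Energy density. Let $\nu=(\mathfrak{g}(\mathfrak{a},\mathfrak{a})\mathfrak{g}(\mathfrak{b},\mathfrak{b})-\mathfrak{g}(\mathfrak{a},\mathfrak{b})^2)^{1/2}$. For $A\in\mathrm{Hom}(T_p\mathcal{M},\mathbb{R}^2)$, let $\det A=\det[A(\mathfrak{a}_p)|A(\mathfrak{b}_p)]/\nu(p)$, with $\det[u|w]=u_1w_2-u_2w_1$. With $\rho^{\mathfrak{u}}=|\mathfrak{u}|/(|\mathfrak{a}|+|\mathfrak{b}|+|\mathfrak{c}|)$, \[ W_p(A)=\sum_{\mathfrak{u}\in\{\mathfrak{a},\mathfrak{b},\mathfrak{c}\}}\rho^{\mathfrak{u}}(p)\Phi(|A(\mathfrak{u}_p)|/|\mathfrak{u}_p|)+\Psi(\det A). \] $QW_p$ is the quasiconvex envelope of $W_p$ on $\mathrm{Hom}(T_p\mathcal{M},\mathbb{R}^2)$: $QW_p(A)=\inf\{\frac{1}{|D|}\int_DW_p(A+d\varphi):\varphi\in C^\infty_c(D;\mathbb{R}^2)\}$, where $D$ is the unit disc in $T_p\mathcal{M}$. *)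

theory Defs
  imports "HOL-Analysis.Analysis"
begin

text \<open>Coordinate model. The compact disc M is represented through a global chart as a
subset of real^2; tangent vectors at every point are coordinate vectors in real^2.\<close>

text \<open>Smoothness (C-infinity, up to the boundary): all iterated Frechet derivatives
exist (relative to S). D vs x is the iterated derivative in the directions vs.\<close>
definition smooth_on :: "'a::real_normed_vector set \<Rightarrow> ('a \<Rightarrow> 'b::real_normed_vector) \<Rightarrow> bool" where
  "smooth_on S f \<longleftrightarrow> (\<exists>D :: 'a list \<Rightarrow> 'a \<Rightarrow> 'b.
      (\<forall>x\<in>S. D [] x = f x) \<and>
      (\<forall>vs. \<forall>x\<in>S. (D vs has_derivative (\<lambda>h. D (h # vs) x)) (at x within S)))"

definition smooth_disc :: "(real^2) set \<Rightarrow> bool" where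
  "smooth_disc M \<longleftrightarrow> M homeomorphic cball (0::real^2) 1 \<and>
     (\<exists>f :: real^2 \<Rightarrow> real. smooth_on UNIV f \<and> M = {x. f x \<le> 0} \<and>
        (\<forall>x. f x = 0 \<longrightarrow> frechet_derivative f (at x) \<noteq> (\<lambda>h. 0)))"

definition gmet :: "(real^2 \<Rightarrow> real^2^2) \<Rightarrow> real^2 \<Rightarrow> real^2 \<Rightarrow> real^2 \<Rightarrow> real" where
  "gmet G p u v = u \<bullet> (G p *v v)"

definition gnorm :: "(real^2 \<Rightarrow> real^2^2) \<Rightarrow> real^2 \<Rightarrow> real^2 \<Rightarrow> real" where
  "gnorm G p u = sqrt (gmet G p u u)"

definition riemannian_metric :: "(real^2) set \<Rightarrow> (real^2 \<Rightarrow> real^2^2) \<Rightarrow> bool" where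
  "riemannian_metric M G \<longleftrightarrow> smooth_on M G \<and>
     (\<forall>p\<in>M. transpose (G p) = G p \<and> (\<forall>u. u \<noteq> 0 \<longrightarrow> gmet G p u u > 0))"

text \<open>Christoffel symbols: chr C X Y = component vector of Gamma(X,Y);
nabla_X Y = DY(X) + Gamma(X,Y).\<close>
definition chr :: "real^2^2^2 \<Rightarrow> real^2 \<Rightarrow> real^2 \<Rightarrow> real^2" where
  "chr C X Y = (\<chi> k. \<Sum>i\<in>UNIV. \<Sum>j\<in>UNIV. C $ k $ i $ j * X $ i * Y $ j)"

definition flat_symmetric_connection :: "(real^2) set \<Rightarrow> (real^2 \<Rightarrow> real^2^2^2) \<Rightarrow> bool" where
  "flat_symmetric_connection M \<Gamma> \<longleftrightarrow> smooth_on M \<Gamma> \<and>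
     (\<forall>p\<in>M. \<forall>k i j. \<Gamma> p $ k $ i $ j = \<Gamma> p $ k $ j $ i) \<and>
     (\<exists>D\<Gamma>. (\<forall>p\<in>M. (\<Gamma> has_derivative D\<Gamma> p) (at p within M)) \<and>
        (\<forall>p\<in>M. \<forall>X Y Z.
            chr (D\<Gamma> p X) Y Z - chr (D\<Gamma> p Y) X Z
            + chr (\<Gamma> p) X (chr (\<Gamma> p) Y Z) - chr (\<Gamma> p) Y (chr (\<Gamma> p) X Z) = 0))"

definition parallel_field :: "(real^2) set \<Rightarrow> (real^2 \<Rightarrow> real^2^2^2) \<Rightarrow> (real^2 \<Rightarrow> real^2) \<Rightarrow> bool" where
  "parallel_field M \<Gamma> \<xi> \<longleftrightarrow> smooth_on M \<xi> \<and>
     (\<exists>D\<xi>. \<forall>p\<in>M. (\<xi> has_derivative D\<xi> p) (at p within M) \<and>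
        (\<forall>X. D\<xi> p X + chr (\<Gamma> p) X (\<xi> p) = 0))"

definition conformal :: "(real^2) set \<Rightarrow> (real^2 \<Rightarrow> real^2^2) \<Rightarrow> (real^2 \<Rightarrow> real^2^2^2) \<Rightarrow> (real^2 \<Rightarrow> real) \<Rightarrow> bool" where
  "conformal M G \<Gamma> \<phi> \<longleftrightarrow> (\<forall>p\<in>M. \<phi> p > 0) \<and>
     (\<forall>\<xi> \<eta>. parallel_field M \<Gamma> \<xi> \<and> parallel_field M \<Gamma> \<eta> \<longrightarrow>
        (\<forall>p\<in>M. \<forall>q\<in>M. gmet G p (\<xi> p) (\<eta> p) / (\<phi> p)\<^sup>2 = gmet G q (\<xi> q) (\<eta> q) / (\<phi> q)\<^sup>2))"

definition det2 :: "real^2 \<Rightarrow> real^2 \<Rightarrow> real" where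
  "det2 u w = u $ 1 * w $ 2 - u $ 2 * w $ 1"

definition Wdens :: "(real \<Rightarrow> real) \<Rightarrow> (real \<Rightarrow> real) \<Rightarrow> (real^2 \<Rightarrow> real^2^2)
    \<Rightarrow> (real^2 \<Rightarrow> real^2) \<Rightarrow> (real^2 \<Rightarrow> real^2) \<Rightarrow> (real^2 \<Rightarrow> real^2)
    \<Rightarrow> real^2 \<Rightarrow> (real^2 \<Rightarrow> real^2) \<Rightarrow> real" where
  "Wdens \<Phi> \<Psi> G a b c p A =
     (let na = gnorm G p (a p); nb = gnorm G p (b p); nc = gnorm G p (c p);
          s = na + nb + nc;
          \<nu> = sqrt (gmet G p (a p) (a p) * gmet G p (b p) (b p) - (gmet G p (a p) (b p))\<^sup>2)
      in (na / s) * \<Phi> (norm (A (a p)) / na) + (nb / s) * \<Phi> (norm (A (b p)) / nb)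
         + (nc / s) * \<Phi> (norm (A (c p)) / nc) + \<Psi> (det2 (A (a p)) (A (b p)) / \<nu>))"

definition QWdens :: "(real \<Rightarrow> real) \<Rightarrow> (real \<Rightarrow> real) \<Rightarrow> (real^2 \<Rightarrow> real^2^2)
    \<Rightarrow> (real^2 \<Rightarrow> real^2) \<Rightarrow> (real^2 \<Rightarrow> real^2) \<Rightarrow> (real^2 \<Rightarrow> real^2)
    \<Rightarrow> real^2 \<Rightarrow> (real^2 \<Rightarrow> real^2) \<Rightarrow> real" where
  "QWdens \<Phi> \<Psi> G a b c p A =
     (let D = {x. gmet G p x x < 1}
      in Inf {integral D (\<lambda>x. Wdens \<Phi> \<Psi> G a b c p (\<lambda>v. A v + frechet_derivative \<phi> (at x) v))
                / measure lebesgue D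
             | \<phi> :: real^2 \<Rightarrow> real^2. smooth_on UNIV \<phi> \<and>
                 compact (closure {x. \<phi> x \<noteq> 0}) \<and> closure {x. \<phi> x \<noteq> 0} \<subseteq> D})"

definition C1_path_in :: "(real^2) set \<Rightarrow> (real \<Rightarrow> real^2) \<Rightarrow> (real \<Rightarrow> real^2) \<Rightarrow> bool" where
  "C1_path_in M \<gamma> \<gamma>' \<longleftrightarrow> \<gamma> ` {0..1} \<subseteq> M \<and> continuous_on {0..1} \<gamma>' \<and>
     (\<forall>t\<in>{0..1}. (\<gamma> has_vector_derivative \<gamma>' t) (at t within {0..1}))"

text \<open>Parallel transport along gamma (from gamma 0 to gamma 1) for the connection
tilde-nabla_X Y = nabla_X Y + X(log phi) Y.\<close>
definition tilde_transport :: "(real^2) set \<Rightarrow> (real^2 \<Rightarrow> real^2^2^2) \<Rightarrow> (real^2 \<Rightarrow> real)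
    \<Rightarrow> (real \<Rightarrow> real^2) \<Rightarrow> (real \<Rightarrow> real^2) \<Rightarrow> real^2 \<Rightarrow> real^2" where
  "tilde_transport M \<Gamma> \<phi> \<gamma> \<gamma>' v0 =
     (THE w. \<exists>v :: real \<Rightarrow> real^2. v 0 = v0 \<and> v 1 = w \<and>
        (\<forall>t\<in>{0..1}. (v has_vector_derivative
            - (chr (\<Gamma> (\<gamma> t)) (\<gamma>' t) (v t)
               + frechet_derivative (\<lambda>x. ln (\<phi> x)) (at (\<gamma> t) within M) (\<gamma>' t) *\<^sub>R v t))
          (at t within {0..1})))"

end

theory Submission imports Defs begin

text \<open>In the frame a, b of \<nabla>-parallel fields, every \<nabla>-parallel vector along a path keeps its
  coordinates (the derivative of det2 (u, b) / det2 (a, b) vanishes because both determinants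
  satisfy the same linear ODE). The tilde connection differs from \<nabla> by the exact form d(ln \<phi>),
  so \<phi> times a tilde-parallel vector is \<nabla>-parallel, and tilde transport from q to p is the
  linear map T with T (a q) = r a p, T (b q) = r b p, T (c q) = r c p, where r = \<phi> q / \<phi> p.
  Conformality makes T an isometry from g_q to g_p and scales the g-norms of a, b, c by the
  common factor r, which cancels in |A u| / |u| and in det A: this is the identity for W.
  For QW, T maps the g_q unit disc onto the g_p unit disc and test functions to test functions,
  and the Jacobian of T cancels between the integral and the measure of the disc.\<close>

lemma det2_swap: "det2 x y = - det2 y x"
  by (simp add: det2_def)

lemma det2_scaleR_left [simp]: "det2 (s *\<^sub>R x) y = s * det2 x y"
  by (simp add: det2_def algebra_simps)

lemma det2_scaleR_right [simp]: "det2 x (s *\<^sub>R y) = s * det2 x y"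
  by (simp add: det2_def algebra_simps)

lemma det2_neg_left [simp]: "det2 (- x) y = - det2 x y"
  by (simp add: det2_def)

lemma det2_neg_right [simp]: "det2 x (- y) = - det2 x y"
  by (simp add: det2_def)

lemma det2_ratio_swap: "det2 x y / det2 x z = det2 y x / det2 z x"
  by (subst (1 2) det2_swap) simp

lemma det2_cramer:
  assumes "det2 a b \<noteq> 0"
  shows "v = (det2 v b / det2 a b) *\<^sub>R a + (det2 a v / det2 a b) *\<^sub>R b"
proof -
  have "det2 a b *\<^sub>R v = det2 v b *\<^sub>R a + det2 a v *\<^sub>R b"
    by (simp add: vec_eq_iff forall_2 det2_def algebra_simps)
  then show ?thesis
    using assms by (simp add: vec_eq_iff field_simps)
qed

lemma det2_chr_trace:
  "det2 (chr C X u) w + det2 u (chr C X w)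
   = (\<Sum>k\<in>UNIV. \<Sum>i\<in>UNIV. C $ k $ i $ k * X $ i) * det2 u w"
  by (simp add: chr_def det2_def sum_2 algebra_simps)

lemma chr_linear_right: "chr C X (s *\<^sub>R Y + r *\<^sub>R Z) = s *\<^sub>R chr C X Y + r *\<^sub>R chr C X Z"
  by (simp add: chr_def vec_eq_iff sum_2 algebra_simps)

lemma has_vector_derivative_det2:
  assumes "(x has_vector_derivative x') (at t within S)" "(y has_vector_derivative y') (at t within S)"
  shows "((\<lambda>t. det2 (x t) (y t)) has_vector_derivative (det2 x' (y t) + det2 (x t) y')) (at t within S)"
proof -
  have nth: "((\<lambda>t. f t $ i) has_vector_derivative f' $ i) (at t within S)"
    if "(f has_vector_derivative f') (at t within S)" for f :: "real \<Rightarrow> real^2" and f' i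
    using bounded_linear.has_vector_derivative[OF bounded_linear_vec_nth that] .
  have "((\<lambda>t. x t $ 1 * y t $ 2 - x t $ 2 * y t $ 1) has_vector_derivative
     (x t $ 1 * y' $ 2 + x' $ 1 * y t $ 2 - (x t $ 2 * y' $ 1 + x' $ 2 * y t $ 1))) (at t within S)"
    by (intro has_vector_derivative_diff has_vector_derivative_mult nth assms)
  then show ?thesis
    unfolding det2_def by (rule has_vector_derivative_eq_rhs) (simp add: algebra_simps)
qed

definition parallel_along ::
    "(real^2 \<Rightarrow> real^2^2^2) \<Rightarrow> (real \<Rightarrow> real^2) \<Rightarrow> (real \<Rightarrow> real^2) \<Rightarrow> (real \<Rightarrow> real^2) \<Rightarrow> bool" where
  "parallel_along \<Gamma> \<gamma> \<gamma>' u \<longleftrightarrow> (\<forall>t\<in>{0..1}.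
     (u has_vector_derivative - chr (\<Gamma> (\<gamma> t)) (\<gamma>' t) (u t)) (at t within {0..1}))"

definition tilde_parallel_along :: "(real^2) set \<Rightarrow> (real^2 \<Rightarrow> real^2^2^2) \<Rightarrow> (real^2 \<Rightarrow> real)
    \<Rightarrow> (real \<Rightarrow> real^2) \<Rightarrow> (real \<Rightarrow> real^2) \<Rightarrow> (real \<Rightarrow> real^2) \<Rightarrow> bool" where
  "tilde_parallel_along M \<Gamma> \<phi> \<gamma> \<gamma>' v \<longleftrightarrow> (\<forall>t\<in>{0..1}. (v has_vector_derivative
     - (chr (\<Gamma> (\<gamma> t)) (\<gamma>' t) (v t)
        + frechet_derivative (\<lambda>x. ln (\<phi> x)) (at (\<gamma> t) within M) (\<gamma>' t) *\<^sub>R v t))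
     (at t within {0..1}))"

lemma tilde_transport_eq_The:
  "tilde_transport M \<Gamma> \<phi> \<gamma> \<gamma>' v0
   = (THE w. \<exists>v. v 0 = v0 \<and> v 1 = w \<and> tilde_parallel_along M \<Gamma> \<phi> \<gamma> \<gamma>' v)"
  unfolding tilde_transport_def tilde_parallel_along_def ..

lemma C1_path_in_mem: "C1_path_in M \<gamma> \<gamma>' \<Longrightarrow> t \<in> {0..1} \<Longrightarrow> \<gamma> t \<in> M"
  unfolding C1_path_in_def by auto

lemma parallel_along_cong:
  assumes "\<And>t. t \<in> {0..1} \<Longrightarrow> u t = w t"
  shows "parallel_along \<Gamma> \<gamma> \<gamma>' u \<longleftrightarrow> parallel_along \<Gamma> \<gamma> \<gamma>' w"
  unfolding parallel_along_def
  using assms has_vector_derivative_transform[of _ "{0..1}" w u] has_vector_derivative_transform[of _ "{0..1}" u w]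
  by auto

lemma parallel_along_lincomb:
  assumes "parallel_along \<Gamma> \<gamma> \<gamma>' u" "parallel_along \<Gamma> \<gamma> \<gamma>' w"
  shows "parallel_along \<Gamma> \<gamma> \<gamma>' (\<lambda>t. s *\<^sub>R u t + r *\<^sub>R w t)"
  unfolding parallel_along_def
proof
  fix t :: real assume t: "t \<in> {0..1}"
  have "((\<lambda>t. s *\<^sub>R u t + r *\<^sub>R w t) has_vector_derivative
      s *\<^sub>R (- chr (\<Gamma> (\<gamma> t)) (\<gamma>' t) (u t)) + r *\<^sub>R (- chr (\<Gamma> (\<gamma> t)) (\<gamma>' t) (w t))) (at t within {0..1})"
    using assms t unfolding parallel_along_def
    by (intro has_vector_derivative_add bounded_linear.has_vector_derivative[OF bounded_linear_scaleR_right])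
      auto
  then show "((\<lambda>t. s *\<^sub>R u t + r *\<^sub>R w t) has_vector_derivative
      - chr (\<Gamma> (\<gamma> t)) (\<gamma>' t) (s *\<^sub>R u t + r *\<^sub>R w t)) (at t within {0..1})"
    by (simp add: chr_linear_right)
qed

lemma parallel_field_along_path:
  assumes a: "parallel_field M \<Gamma> a" and \<gamma>: "C1_path_in M \<gamma> \<gamma>'"
  shows "parallel_along \<Gamma> \<gamma> \<gamma>' (a \<circ> \<gamma>)"
  unfolding parallel_along_def
proof
  fix t :: real assume t: "t \<in> {0..1}"
  obtain Da where Da: "\<forall>p\<in>M. (a has_derivative Da p) (at p within M) \<and> (\<forall>X. Da p X + chr (\<Gamma> p) X (a p) = 0)"
    using a unfolding parallel_field_def by blast
  have img: "\<gamma> ` {0..1} \<subseteq> M" and \<gamma>': "(\<gamma> has_vector_derivative \<gamma>' t) (at t within {0..1})"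
    using \<gamma> t unfolding C1_path_in_def by auto
  have \<gamma>t: "\<gamma> t \<in> M" using img t by auto
  have "(a has_derivative Da (\<gamma> t)) (at (\<gamma> t) within \<gamma> ` {0..1})"
    using Da \<gamma>t has_derivative_subset img by blast
  from vector_derivative_diff_chain_within[OF \<gamma>' this]
  have "((a \<circ> \<gamma>) has_vector_derivative Da (\<gamma> t) (\<gamma>' t)) (at t within {0..1})" .
  moreover have "Da (\<gamma> t) (\<gamma>' t) = - chr (\<Gamma> (\<gamma> t)) (\<gamma>' t) (a (\<gamma> t))"
    using Da \<gamma>t by (metis eq_neg_iff_add_eq_0)
  ultimately show "((a \<circ> \<gamma>) has_vector_derivative - chr (\<Gamma> (\<gamma> t)) (\<gamma>' t) ((a \<circ> \<gamma>) t)) (at t within {0..1})"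
    by simp
qed

lemma parallel_along_det2_ratio:
  assumes u: "parallel_along \<Gamma> \<gamma> \<gamma>' u" and v: "parallel_along \<Gamma> \<gamma> \<gamma>' v"
    and w: "parallel_along \<Gamma> \<gamma> \<gamma>' w" and vw: "\<forall>t\<in>{0..1}. det2 (v t) (w t) \<noteq> 0"
  shows "det2 (u 1) (w 1) / det2 (v 1) (w 1) = det2 (u 0) (w 0) / det2 (v 0) (w 0)"
proof -
  define \<tau> where "\<tau> t = (\<Sum>k\<in>UNIV. \<Sum>i\<in>UNIV. \<Gamma> (\<gamma> t) $ k $ i $ k * \<gamma>' t $ i)" for t
  have det2_deriv: "((\<lambda>t. det2 (x t) (w t)) has_real_derivative - \<tau> t * det2 (x t) (w t)) (at t within {0..1})"
    if "parallel_along \<Gamma> \<gamma> \<gamma>' x" "t \<in> {0..1}" for x t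
  proof -
    have "((\<lambda>t. det2 (x t) (w t)) has_vector_derivative
        det2 (- chr (\<Gamma> (\<gamma> t)) (\<gamma>' t) (x t)) (w t) + det2 (x t) (- chr (\<Gamma> (\<gamma> t)) (\<gamma>' t) (w t)))
        (at t within {0..1})"
      using that w unfolding parallel_along_def by (intro has_vector_derivative_det2) auto
    then show ?thesis
      unfolding has_real_derivative_iff_has_vector_derivative \<tau>_def
      by (rule has_vector_derivative_eq_rhs) (simp add: det2_chr_trace[symmetric])
  qed
  have "((\<lambda>t. det2 (u t) (w t) / det2 (v t) (w t)) has_real_derivative 0) (at t within {0..1})"
    if t: "t \<in> {0..1}" for t
  proof -
    have "(- \<tau> t * det2 (u t) (w t) * det2 (v t) (w t) - det2 (u t) (w t) * (- \<tau> t * det2 (v t) (w t)))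
        / (det2 (v t) (w t) * det2 (v t) (w t)) = 0"
      by simp
    with DERIV_divide[OF det2_deriv[OF u t] det2_deriv[OF v t]] vw t show ?thesis
      by metis
  qed
  then have "\<exists>c. \<forall>t\<in>{0..1}. det2 (u t) (w t) / det2 (v t) (w t) = c"
    by (intro has_field_derivative_zero_constant) auto
  then show ?thesis by auto
qed

lemma parallel_along_frame_coords:
  assumes u: "parallel_along \<Gamma> \<gamma> \<gamma>' u" and v: "parallel_along \<Gamma> \<gamma> \<gamma>' v"
    and w: "parallel_along \<Gamma> \<gamma> \<gamma>' w" and vw: "\<forall>t\<in>{0..1}. det2 (v t) (w t) \<noteq> 0"
  shows "u 1 = (det2 (u 0) (w 0) / det2 (v 0) (w 0)) *\<^sub>R v 1 + (det2 (v 0) (u 0) / det2 (v 0) (w 0)) *\<^sub>R w 1"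
proof -
  have wv: "\<forall>t\<in>{0..1}. det2 (w t) (v t) \<noteq> 0"
    using vw det2_swap by (metis neg_equal_0_iff_equal)
  have "det2 (v 1) (u 1) / det2 (v 1) (w 1) = det2 (u 1) (v 1) / det2 (w 1) (v 1)"
    by (rule det2_ratio_swap)
  also have "\<dots> = det2 (u 0) (v 0) / det2 (w 0) (v 0)"
    by (rule parallel_along_det2_ratio[OF u w v wv])
  also have "\<dots> = det2 (v 0) (u 0) / det2 (v 0) (w 0)"
    by (rule det2_ratio_swap[symmetric])
  finally show ?thesis
    using det2_cramer[of "v 1" "w 1" "u 1"] parallel_along_det2_ratio[OF u v w vw] vw by simp
qed

lemma has_vector_derivative_ln_along_path:
  fixes \<phi> :: "real^2 \<Rightarrow> real"
  assumes \<phi>: "smooth_on M \<phi>" "\<forall>x\<in>M. \<phi> x > 0" and \<gamma>: "C1_path_in M \<gamma> \<gamma>'" and t: "t \<in> {0..1}"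
  shows "((\<lambda>t. ln (\<phi> (\<gamma> t))) has_vector_derivative
     frechet_derivative (\<lambda>x. ln (\<phi> x)) (at (\<gamma> t) within M) (\<gamma>' t)) (at t within {0..1})"
proof -
  obtain D where D: "\<forall>x\<in>M. D [] x = \<phi> x" "\<forall>vs. \<forall>x\<in>M. (D vs has_derivative (\<lambda>h. D (h # vs) x)) (at x within M)"
    using \<phi>(1) unfolding smooth_on_def by blast
  have img: "\<gamma> ` {0..1} \<subseteq> M" and \<gamma>': "(\<gamma> has_vector_derivative \<gamma>' t) (at t within {0..1})"
    using \<gamma> t unfolding C1_path_in_def by auto
  have \<gamma>t: "\<gamma> t \<in> M" using img t by auto
  have "(D [] has_derivative (\<lambda>h. D [h] (\<gamma> t))) (at (\<gamma> t) within M)"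
    using D(2) \<gamma>t by blast
  from has_derivative_transform[OF \<gamma>t _ this]
  have "(\<phi> has_derivative (\<lambda>h. D [h] (\<gamma> t))) (at (\<gamma> t) within M)"
    by (simp add: D(1))
  then have "((\<lambda>x. ln (\<phi> x)) has_derivative (\<lambda>h. D [h] (\<gamma> t) * inverse (\<phi> (\<gamma> t)))) (at (\<gamma> t) within M)"
    using \<phi>(2) \<gamma>t by (intro has_derivative_ln) auto
  then have "((\<lambda>x. ln (\<phi> x)) has_derivative frechet_derivative (\<lambda>x. ln (\<phi> x)) (at (\<gamma> t) within M))
      (at (\<gamma> t) within \<gamma> ` {0..1})"
    using frechet_derivative_works has_derivative_subset img unfolding differentiable_def by blast
  from vector_derivative_diff_chain_within[OF \<gamma>' this] show ?thesis
    by (simp add: o_def)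
qed

lemma tilde_parallel_along_iff:
  fixes \<phi> :: "real^2 \<Rightarrow> real"
  assumes \<phi>: "smooth_on M \<phi>" "\<forall>x\<in>M. \<phi> x > 0" and \<gamma>: "C1_path_in M \<gamma> \<gamma>'"
  shows "tilde_parallel_along M \<Gamma> \<phi> \<gamma> \<gamma>' v \<longleftrightarrow> parallel_along \<Gamma> \<gamma> \<gamma>' (\<lambda>t. \<phi> (\<gamma> t) *\<^sub>R v t)"
proof -
  define k where "k t = frechet_derivative (\<lambda>x. ln (\<phi> x)) (at (\<gamma> t) within M) (\<gamma>' t)" for t
  define P where "P t = chr (\<Gamma> (\<gamma> t)) (\<gamma>' t)" for t
  define lg where "lg t = ln (\<phi> (\<gamma> t))" for t
  define u where "u t = \<phi> (\<gamma> t) *\<^sub>R v t" for t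
  have \<phi>_nonzero: "\<phi> (\<gamma> s) \<noteq> 0" if "s \<in> {0..1}" for s
    using \<phi>(2) C1_path_in_mem[OF \<gamma> that] by fastforce
  have P_scale: "P t (s *\<^sub>R x) = s *\<^sub>R P t x" for t s x
    using chr_linear_right[of _ _ s x 0 x] unfolding P_def by simp
  have pointwise: "(v has_vector_derivative - (P t (v t) + k t *\<^sub>R v t)) (at t within {0..1})
      \<longleftrightarrow> (u has_vector_derivative - P t (u t)) (at t within {0..1})" if t: "t \<in> {0..1}" for t
  proof -
    have exp_lg: "exp (lg s) = \<phi> (\<gamma> s)" if "s \<in> {0..1}" for s
      unfolding lg_def using \<phi>(2) C1_path_in_mem[OF \<gamma> that] by simp
    have \<phi>t: "\<phi> (\<gamma> t) > 0"
      using \<phi>(2) C1_path_in_mem[OF \<gamma> t] by blast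
    have lg': "(lg has_real_derivative k t) (at t within {0..1})"
      unfolding lg_def k_def has_real_derivative_iff_has_vector_derivative
      by (rule has_vector_derivative_ln_along_path[OF \<phi> \<gamma> t])
    show ?thesis
    proof
      assume v': "(v has_vector_derivative - (P t (v t) + k t *\<^sub>R v t)) (at t within {0..1})"
      have "((\<lambda>s. exp (lg s) *\<^sub>R v s) has_vector_derivative
          exp (lg t) *\<^sub>R (- (P t (v t) + k t *\<^sub>R v t)) + (exp (lg t) * k t) *\<^sub>R v t) (at t within {0..1})"
        by (rule has_vector_derivative_scaleR[OF DERIV_chain2[OF DERIV_exp lg'] v'])
      then have "((\<lambda>s. exp (lg s) *\<^sub>R v s) has_vector_derivative - P t (u t)) (at t within {0..1})"
        by (rule has_vector_derivative_eq_rhs) (simp add: u_def exp_lg[OF t] P_scale algebra_simps)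
      from has_vector_derivative_transform[OF t _ this]
      show "(u has_vector_derivative - P t (u t)) (at t within {0..1})"
        by (simp add: u_def exp_lg)
    next
      assume u': "(u has_vector_derivative - P t (u t)) (at t within {0..1})"
      have "((\<lambda>s. exp (- lg s) *\<^sub>R u s) has_vector_derivative
          exp (- lg t) *\<^sub>R (- P t (u t)) + (exp (- lg t) * - k t) *\<^sub>R u t) (at t within {0..1})"
        by (rule has_vector_derivative_scaleR[OF DERIV_chain2[OF DERIV_exp DERIV_minus[OF lg']] u'])
      then have "((\<lambda>s. exp (- lg s) *\<^sub>R u s) has_vector_derivative - (P t (v t) + k t *\<^sub>R v t))
          (at t within {0..1})"
        using exp_lg[OF t] \<phi>t
        by (elim has_vector_derivative_eq_rhs) (simp add: u_def exp_minus P_scale algebra_simps)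
      then show "(v has_vector_derivative - (P t (v t) + k t *\<^sub>R v t)) (at t within {0..1})"
        by (elim has_vector_derivative_transform[OF t, rotated]) (simp add: u_def exp_minus exp_lg \<phi>_nonzero)
    qed
  qed
  then show ?thesis
    unfolding tilde_parallel_along_def parallel_along_def u_def[symmetric] P_def k_def by blast
qed

text \<open>Parallel transport for the original connection keeps the coordinates in the parallel
  frame (a, b); the tilde connection multiplies the result by \<phi> q / \<phi> p.\<close>
definition conformal_transport :: "(real^2 \<Rightarrow> real) \<Rightarrow> (real^2 \<Rightarrow> real^2) \<Rightarrow> (real^2 \<Rightarrow> real^2)
    \<Rightarrow> real^2 \<Rightarrow> real^2 \<Rightarrow> real^2 \<Rightarrow> real^2" where
  "conformal_transport \<phi> a b p q v = (\<phi> q / \<phi> p) *\<^sub>R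
     ((det2 v (b q) / det2 (a q) (b q)) *\<^sub>R a p + (det2 (a q) v / det2 (a q) (b q)) *\<^sub>R b p)"

lemma tilde_transport_eq_conformal_transport:
  fixes \<phi> :: "real^2 \<Rightarrow> real"
  assumes a: "parallel_field M \<Gamma> a" and b: "parallel_field M \<Gamma> b"
    and ab: "\<forall>p\<in>M. det2 (a p) (b p) \<noteq> 0"
    and \<phi>: "smooth_on M \<phi>" "\<forall>x\<in>M. \<phi> x > 0" and \<gamma>: "C1_path_in M \<gamma> \<gamma>'"
  shows "tilde_transport M \<Gamma> \<phi> \<gamma> \<gamma>' = conformal_transport \<phi> a b (\<gamma> 1) (\<gamma> 0)"
proof
  fix v0
  let ?p = "\<gamma> 1" and ?q = "\<gamma> 0"
  have \<phi>_nonzero: "\<phi> ?p \<noteq> 0" "\<phi> ?q \<noteq> 0"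
    using \<phi>(2) C1_path_in_mem[OF \<gamma>, of 0] C1_path_in_mem[OF \<gamma>, of 1] by fastforce+
  have a\<gamma>: "parallel_along \<Gamma> \<gamma> \<gamma>' (a \<circ> \<gamma>)" and b\<gamma>: "parallel_along \<Gamma> \<gamma> \<gamma>' (b \<circ> \<gamma>)"
    using parallel_field_along_path a b \<gamma> by blast+
  have ab\<gamma>: "\<forall>t\<in>{0..1}. det2 ((a \<circ> \<gamma>) t) ((b \<circ> \<gamma>) t) \<noteq> 0"
    using ab C1_path_in_mem[OF \<gamma>] by simp
  define \<alpha> where "\<alpha> = det2 v0 (b ?q) / det2 (a ?q) (b ?q)"
  define \<beta> where "\<beta> = det2 (a ?q) v0 / det2 (a ?q) (b ?q)"
  define v where "v t = (\<phi> ?q / \<phi> (\<gamma> t)) *\<^sub>R (\<alpha> *\<^sub>R a (\<gamma> t) + \<beta> *\<^sub>R b (\<gamma> t))" for t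
  have "parallel_along \<Gamma> \<gamma> \<gamma>' (\<lambda>t. (\<phi> ?q * \<alpha>) *\<^sub>R (a \<circ> \<gamma>) t + (\<phi> ?q * \<beta>) *\<^sub>R (b \<circ> \<gamma>) t)"
    by (rule parallel_along_lincomb[OF a\<gamma> b\<gamma>])
  then have "parallel_along \<Gamma> \<gamma> \<gamma>' (\<lambda>t. \<phi> (\<gamma> t) *\<^sub>R v t)"
    using \<phi>(2) C1_path_in_mem[OF \<gamma>]
    by (subst parallel_along_cong) (auto simp: v_def scaleR_add_right less_imp_neq[symmetric])
  then have v_tilde: "tilde_parallel_along M \<Gamma> \<phi> \<gamma> \<gamma>' v"
    using tilde_parallel_along_iff[OF \<phi> \<gamma>] by blast
  have endpoint: "w = conformal_transport \<phi> a b ?p ?q v0"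
    if "w' 0 = v0" "w' 1 = w" "tilde_parallel_along M \<Gamma> \<phi> \<gamma> \<gamma>' w'" for w w'
  proof -
    have "parallel_along \<Gamma> \<gamma> \<gamma>' (\<lambda>t. \<phi> (\<gamma> t) *\<^sub>R w' t)"
      using that tilde_parallel_along_iff[OF \<phi> \<gamma>] by blast
    from parallel_along_frame_coords[OF this a\<gamma> b\<gamma> ab\<gamma>]
    have "\<phi> ?p *\<^sub>R w = (\<phi> ?q * \<alpha>) *\<^sub>R a ?p + (\<phi> ?q * \<beta>) *\<^sub>R b ?p"
      using that by (simp add: \<alpha>_def \<beta>_def)
    with \<phi>_nonzero(1) have "w = inverse (\<phi> ?p) *\<^sub>R ((\<phi> ?q * \<alpha>) *\<^sub>R a ?p + (\<phi> ?q * \<beta>) *\<^sub>R b ?p)"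
      by (metis left_inverse scaleR_one scaleR_scaleR)
    then show ?thesis
      unfolding conformal_transport_def \<alpha>_def[symmetric] \<beta>_def[symmetric]
      by (simp add: scaleR_add_right divide_inverse mult_ac)
  qed
  have "v 0 = v0"
    using \<phi>_nonzero(2) det2_cramer[of "a ?q" "b ?q" v0] ab\<gamma> by (simp add: v_def \<alpha>_def \<beta>_def)
  then show "tilde_transport M \<Gamma> \<phi> \<gamma> \<gamma>' v0 = conformal_transport \<phi> a b ?p ?q v0"
    unfolding tilde_transport_eq_The using v_tilde endpoint by (intro the_equality) blast+
qed

lemma conformal_transport_linear: "linear (conformal_transport \<phi> a b p q)"
proof (rule linearI)
  fix x y :: "real^2" and s :: real
  show "conformal_transport \<phi> a b p q (x + y) = conformal_transport \<phi> a b p q x + conformal_transport \<phi> a b p q y"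
    unfolding conformal_transport_def by (simp add: det2_def algebra_simps add_divide_distrib diff_divide_distrib)
  show "conformal_transport \<phi> a b p q (s *\<^sub>R x) = s *\<^sub>R conformal_transport \<phi> a b p q x"
    unfolding conformal_transport_def by (simp add: algebra_simps)
qed

lemma conformal_transport_frame:
  assumes "det2 (a q) (b q) \<noteq> 0"
  shows "conformal_transport \<phi> a b p q (a q) = (\<phi> q / \<phi> p) *\<^sub>R a p"
    and "conformal_transport \<phi> a b p q (b q) = (\<phi> q / \<phi> p) *\<^sub>R b p"
  using assms by (simp_all add: conformal_transport_def det2_def)

lemma conformal_transport_inverse:
  assumes "\<phi> p \<noteq> 0" "\<phi> q \<noteq> 0" "det2 (a p) (b p) \<noteq> 0" "det2 (a q) (b q) \<noteq> 0"
  shows "conformal_transport \<phi> a b q p (conformal_transport \<phi> a b p q x) = x"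
proof -
  let ?T = "conformal_transport \<phi> a b q p"
  define \<alpha> where "\<alpha> = det2 x (b q) / det2 (a q) (b q)"
  define \<beta> where "\<beta> = det2 (a q) x / det2 (a q) (b q)"
  have "?T (conformal_transport \<phi> a b p q x) = ?T ((\<phi> q / \<phi> p * \<alpha>) *\<^sub>R a p + (\<phi> q / \<phi> p * \<beta>) *\<^sub>R b p)"
    unfolding conformal_transport_def \<alpha>_def \<beta>_def by (simp add: scaleR_add_right)
  also have "\<dots> = (\<phi> q / \<phi> p * \<alpha>) *\<^sub>R ?T (a p) + (\<phi> q / \<phi> p * \<beta>) *\<^sub>R ?T (b p)"
    using conformal_transport_linear by (simp add: linear_add linear_scale)
  also have "\<dots> = \<alpha> *\<^sub>R a q + \<beta> *\<^sub>R b q"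
    using assms by (simp add: conformal_transport_frame)
  also have "\<dots> = x"
    unfolding \<alpha>_def \<beta>_def using det2_cramer[OF assms(4)] by metis
  finally show ?thesis .
qed

lemma conformal_gmet_parallel:
  assumes conf: "conformal M G \<Gamma> \<phi>" and "parallel_field M \<Gamma> \<xi>" "parallel_field M \<Gamma> \<eta>"
    and p: "p \<in> M" and q: "q \<in> M"
  shows "gmet G q (\<xi> q) (\<eta> q) = (\<phi> q / \<phi> p)\<^sup>2 * gmet G p (\<xi> p) (\<eta> p)"
proof -
  have "gmet G p (\<xi> p) (\<eta> p) / (\<phi> p)\<^sup>2 = gmet G q (\<xi> q) (\<eta> q) / (\<phi> q)\<^sup>2"
    and "\<phi> p > 0" "\<phi> q > 0"
    using assms unfolding conformal_def by blast+
  then show ?thesis by (simp add: field_simps power_divide)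
qed

lemma gmet_lincomb:
  "gmet G p (s *\<^sub>R u + t *\<^sub>R w) (s *\<^sub>R u + t *\<^sub>R w)
   = s\<^sup>2 * gmet G p u u + s * t * gmet G p u w + t * s * gmet G p w u + t\<^sup>2 * gmet G p w w"
  unfolding gmet_def
  by (simp add: matrix_vector_right_distrib matrix_vector_mult_scaleR inner_add_left inner_add_right
      power2_eq_square algebra_simps)

lemma conformal_transport_isometry:
  assumes conf: "conformal M G \<Gamma> \<phi>" and a: "parallel_field M \<Gamma> a" and b: "parallel_field M \<Gamma> b"
    and p: "p \<in> M" and q: "q \<in> M" and ab: "det2 (a q) (b q) \<noteq> 0"
  shows "gmet G p (conformal_transport \<phi> a b p q x) (conformal_transport \<phi> a b p q x) = gmet G q x x"
proof -
  define r where "r = \<phi> q / \<phi> p"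
  define \<alpha> where "\<alpha> = det2 x (b q) / det2 (a q) (b q)"
  define \<beta> where "\<beta> = det2 (a q) x / det2 (a q) (b q)"
  have scale: "gmet G q (\<xi> q) (\<eta> q) = r\<^sup>2 * gmet G p (\<xi> p) (\<eta> p)"
    if "\<xi> \<in> {a, b}" "\<eta> \<in> {a, b}" for \<xi> \<eta>
    using that conformal_gmet_parallel[OF conf _ _ p q] a b unfolding r_def by blast
  have "conformal_transport \<phi> a b p q x = (r * \<alpha>) *\<^sub>R a p + (r * \<beta>) *\<^sub>R b p"
    unfolding conformal_transport_def r_def \<alpha>_def \<beta>_def by (simp add: scaleR_add_right)
  moreover have "x = \<alpha> *\<^sub>R a q + \<beta> *\<^sub>R b q"
    unfolding \<alpha>_def \<beta>_def by (rule det2_cramer[OF ab])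
  ultimately show ?thesis
    by (simp only: gmet_lincomb scale insertI1 insertI2 singletonI) (simp add: power2_eq_square algebra_simps)
qed

lemma Wdens_rescaled_frame:
  fixes B T :: "real^2 \<Rightarrow> real^2" and r :: real
  assumes r: "r > 0" and B: "linear B"
    and Ta: "T (a q) = r *\<^sub>R a p" and Tb: "T (b q) = r *\<^sub>R b p" and Tc: "T (c q) = r *\<^sub>R c p"
    and gaa: "gmet G q (a q) (a q) = r\<^sup>2 * gmet G p (a p) (a p)"
    and gbb: "gmet G q (b q) (b q) = r\<^sup>2 * gmet G p (b p) (b p)"
    and gcc: "gmet G q (c q) (c q) = r\<^sup>2 * gmet G p (c p) (c p)"
    and gab: "gmet G q (a q) (b q) = r\<^sup>2 * gmet G p (a p) (b p)"
  shows "Wdens \<Phi> \<Psi> G a b c p B = Wdens \<Phi> \<Psi> G a b c q (B \<circ> T)"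
proof -
  have sqrt_r: "sqrt (r\<^sup>2 * x) = r * sqrt x" for x
    using r by (simp add: real_sqrt_mult)
  have gram: "r\<^sup>2 * X * (r\<^sup>2 * Y) - (r\<^sup>2 * Z)\<^sup>2 = (r\<^sup>2)\<^sup>2 * (X * Y - Z\<^sup>2)" for X Y Z :: real
    by (simp add: power2_eq_square algebra_simps)
  have sqrt_r2: "sqrt ((r\<^sup>2)\<^sup>2 * x) = r\<^sup>2 * sqrt x" for x
    by (simp only: real_sqrt_mult real_sqrt_abs abs_power2)
  have B_scale: "B (r *\<^sub>R x) = r *\<^sub>R B x" for x
    using B by (simp add: linear_scale)
  have cancel: "(r * m) / (r * n) = m / n" "(r\<^sup>2 * m) / (r\<^sup>2 * n) = m / n"
    "(r * m) / (r * n + r * k + r * l) = m / (n + k + l)" for m n k l :: real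
    using r by (simp_all add: distrib_left[symmetric])
  show ?thesis
    unfolding Wdens_def Let_def gnorm_def o_def Ta Tb Tc gaa gbb gcc gab B_scale gram sqrt_r sqrt_r2
      norm_scaleR det2_scaleR_left det2_scaleR_right
    using r by (simp add: cancel power2_eq_square)
qed

lemma Wdens_conformal_transport:
  assumes conf: "conformal M G \<Gamma> \<phi>"
    and a: "parallel_field M \<Gamma> a" and b: "parallel_field M \<Gamma> b" and c: "parallel_field M \<Gamma> c"
    and sum0: "\<forall>x\<in>M. a x + b x + c x = 0"
    and p: "p \<in> M" and q: "q \<in> M" and ab: "det2 (a q) (b q) \<noteq> 0" and B: "linear B"
  shows "Wdens \<Phi> \<Psi> G a b c p B = Wdens \<Phi> \<Psi> G a b c q (B \<circ> conformal_transport \<phi> a b p q)"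
proof -
  let ?T = "conformal_transport \<phi> a b p q"
  define r where "r = \<phi> q / \<phi> p"
  have r: "r > 0"
    using conf p q unfolding conformal_def r_def by simp
  have Ta: "?T (a q) = r *\<^sub>R a p" and Tb: "?T (b q) = r *\<^sub>R b p"
    unfolding r_def using conformal_transport_frame[of a q b, OF ab] by blast+
  have "c x = - a x - b x" if "x \<in> M" for x
    using sum0 that add.inverse_unique[of "a x + b x" "c x"] by simp
  then have "c q = - a q - b q" and "c p = - a p - b p"
    using p q by blast+
  then have Tc: "?T (c q) = r *\<^sub>R c p"
    using conformal_transport_linear Ta Tb by (simp add: linear_diff linear_neg scaleR_diff_right)
  have scale: "gmet G q (\<xi> q) (\<eta> q) = r\<^sup>2 * gmet G p (\<xi> p) (\<eta> p)"
    if "\<xi> \<in> {a, b, c}" "\<eta> \<in> {a, b, c}" for \<xi> \<eta>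
    using that conformal_gmet_parallel[OF conf _ _ p q] a b c unfolding r_def by blast
  show ?thesis
    by (rule Wdens_rescaled_frame[OF r B Ta Tb Tc]) (simp_all add: scale)
qed

lemma Wdens_nonneg:
  assumes "\<forall>r\<ge>0. \<Phi> r \<ge> 0" "\<forall>x. \<Psi> x \<ge> 0" "\<And>u. gmet G p u u \<ge> 0"
  shows "Wdens \<Phi> \<Psi> G a b c p B \<ge> 0"
proof -
  have n: "gnorm G p u \<ge> 0" for u
    using assms(3) unfolding gnorm_def by simp
  have "\<Phi> (norm x / gnorm G p u) \<ge> 0" for x u
    using assms(1) n by simp
  moreover have "gnorm G p u / (gnorm G p (a p) + gnorm G p (b p) + gnorm G p (c p)) \<ge> 0" for u
    using n by (simp add: divide_nonneg_nonneg)
  ultimately show ?thesis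
    unfolding Wdens_def Let_def using assms(2)
    by (intro add_nonneg_nonneg mult_nonneg_nonneg) auto
qed

lemma riemannian_metric_gmet_nonneg:
  assumes "riemannian_metric M G" "p \<in> M"
  shows "gmet G p u u \<ge> 0"
  using assms unfolding riemannian_metric_def
  by (cases "u = 0") (auto simp: gmet_def intro: less_imp_le)

lemma gmet_scaleR: "gmet G p (s *\<^sub>R x) (s *\<^sub>R x) = s\<^sup>2 * gmet G p x x"
  unfolding gmet_def by (simp add: matrix_vector_mult_scaleR power2_eq_square)

lemma gmet_coercive:
  assumes pd: "\<forall>u. u \<noteq> 0 \<longrightarrow> gmet G p u u > 0"
  obtains m where "m > 0" "\<And>x. m * (norm x)\<^sup>2 \<le> gmet G p x x"
proof -
  have cont: "continuous_on UNIV (\<lambda>x. gmet G p x x)"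
    unfolding gmet_def
    by (intro continuous_intros linear_continuous_on linear_linear[THEN iffD1] matrix_vector_mul_linear)
  have "sphere (0::real^2) 1 \<noteq> {}" by simp
  from continuous_attains_inf[OF compact_sphere this continuous_on_subset[OF cont subset_UNIV]]
  obtain x0 where x0: "x0 \<in> sphere 0 1" "\<forall>y\<in>sphere 0 1. gmet G p x0 x0 \<le> gmet G p y y"
    by blast
  have "gmet G p x0 x0 * (norm x)\<^sup>2 \<le> gmet G p x x" for x
  proof (cases "x = 0")
    case False
    then have "gmet G p x0 x0 \<le> gmet G p (x /\<^sub>R norm x) (x /\<^sub>R norm x)"
      using x0(2) by simp
    also have "\<dots> = gmet G p x x / (norm x)\<^sup>2"
      by (simp only: gmet_scaleR) (simp add: power_inverse divide_inverse mult.commute)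
    finally show ?thesis
      using False by (simp add: pos_le_divide_eq)
  qed (simp add: gmet_def)
  moreover have "gmet G p x0 x0 > 0"
    using pd x0(1) by (metis mem_sphere_0 norm_zero zero_neq_one)
  ultimately show ?thesis
    using that by blast
qed

lemma gmet_unit_disc_lmeasurable:
  assumes pd: "\<forall>u. u \<noteq> 0 \<longrightarrow> gmet G p u u > 0"
  shows "{x. gmet G p x x < 1} \<in> lmeasurable"
proof (rule lmeasurable_open)
  obtain m where m: "m > 0" "\<And>x. m * (norm x)\<^sup>2 \<le> gmet G p x x"
    using gmet_coercive[OF pd] by blast
  have "norm x \<le> sqrt (1 / m)" if "gmet G p x x < 1" for x
    using m(2)[of x] that m(1) by (intro less_imp_le real_less_rsqrt) (simp add: field_simps)
  then show "bounded {x. gmet G p x x < 1}"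
    unfolding bounded_iff by blast
  show "open {x. gmet G p x x < 1}"
    unfolding gmet_def
    by (intro open_Collect_less continuous_intros linear_continuous_on linear_linear[THEN iffD1]
        matrix_vector_mul_linear)
qed

lemma integral_linear_image_nonneg:
  fixes f :: "real^'n::{finite,wellorder} \<Rightarrow> real" and T :: "real^'n::{finite,wellorder} \<Rightarrow> real^'n::{finite,wellorder}"
  assumes T: "linear T" and f: "\<And>y. f y \<ge> 0"
  shows "integral (T ` S) f = \<bar>det (matrix T)\<bar> * integral S (f \<circ> T)"
proof -
  have vec_iff: "g absolutely_integrable_on U \<longleftrightarrow> (\<lambda>y. vec (g y) :: real^1) absolutely_integrable_on U"
    for g :: "real^'n::{finite,wellorder} \<Rightarrow> real" and U
    using absolutely_integrable_on_1_iff[where f="\<lambda>y. vec (g y)"] by simp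
  show ?thesis
  proof (cases "f absolutely_integrable_on T ` S")
    case True
    then have "integral (T ` S) (\<lambda>y. vec (f y) :: real^1)
        = \<bar>det (matrix T)\<bar> *\<^sub>R integral S ((\<lambda>y. vec (f y)) \<circ> T)"
      using integral_change_of_variables_linear[OF T] vec_iff by blast
    from arg_cong[where f="\<lambda>v. v $ 1", OF this] show ?thesis
      by (simp add: integral_on_1_eq[of _ "\<lambda>y. vec (f y)"] integral_on_1_eq[of _ "\<lambda>x. vec (f (T x))"] o_def)
  next
    case False
    then have "\<not> (f \<circ> T) absolutely_integrable_on S"
      using absolutely_integrable_on_linear_image[OF T, where f="\<lambda>y. vec (f y)" and S=S] vec_iff
      by (auto simp: o_def)
    with False have "\<not> f integrable_on T ` S" "\<not> (f \<circ> T) integrable_on S"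
      using nonnegative_absolutely_integrable_1 f by (metis comp_apply)+
    then show ?thesis
      by (simp add: not_integrable_integral)
  qed
qed

lemma smooth_on_UNIV_differentiable:
  assumes "smooth_on UNIV \<psi>"
  shows "\<psi> differentiable at x"
proof -
  obtain D where D: "\<forall>x. D [] x = \<psi> x" "\<forall>vs x. (D vs has_derivative (\<lambda>h. D (h # vs) x)) (at x)"
    using assms unfolding smooth_on_def by auto
  then have "D [] = \<psi>" by auto
  with D(2) show ?thesis
    unfolding differentiable_def by blast
qed

lemma smooth_on_compose_linear:
  fixes \<psi> :: "'b::euclidean_space \<Rightarrow> 'c::real_normed_vector" and S :: "'a::euclidean_space \<Rightarrow> 'b"
  assumes "smooth_on UNIV \<psi>" "linear S"
  shows "smooth_on UNIV (\<psi> \<circ> S)"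
proof -
  obtain D where D: "\<forall>x\<in>UNIV. D [] x = \<psi> x"
    "\<forall>vs. \<forall>x\<in>UNIV. (D vs has_derivative (\<lambda>h. D (h # vs) x)) (at x within UNIV)"
    using assms(1) unfolding smooth_on_def by blast
  define D' where "D' vs x = D (map S vs) (S x)" for vs x
  have "(D' vs has_derivative (\<lambda>h. D' (h # vs) x)) (at x)" for vs x
  proof -
    have "(D (map S vs) has_derivative (\<lambda>h. D (h # map S vs) (S x))) (at (S x))"
      using D(2) by simp
    from diff_chain_at[OF linear_imp_has_derivative[OF assms(2)] this]
    show ?thesis unfolding D'_def by (simp add: o_def)
  qed
  moreover have "D' [] x = (\<psi> \<circ> S) x" for x
    using D(1) unfolding D'_def by simp
  ultimately show ?thesis
    unfolding smooth_on_def by (intro exI[of _ D']) auto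
qed

lemma average_linear_pullback:
  fixes T :: "real^'n::{finite,wellorder} \<Rightarrow> real^'n::{finite,wellorder}"
    and A \<psi> :: "real^'n::{finite,wellorder} \<Rightarrow> 'b::real_normed_vector"
    and Wp Wq :: "(real^'n::{finite,wellorder} \<Rightarrow> 'b) \<Rightarrow> real"
  assumes T: "linear T" "inj T" and W: "\<And>B. linear B \<Longrightarrow> Wp B = Wq (B \<circ> T)"
    and W_nonneg: "\<And>B. Wp B \<ge> 0" and D: "D \<in> lmeasurable"
    and A: "linear A" and \<psi>: "\<And>x. \<psi> differentiable at x"
  shows "integral D (\<lambda>x. Wq (\<lambda>v. (A \<circ> T) v + frechet_derivative (\<psi> \<circ> T) (at x) v)) / measure lebesgue D
       = integral (T ` D) (\<lambda>y. Wp (\<lambda>v. A v + frechet_derivative \<psi> (at y) v)) / measure lebesgue (T ` D)"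
proof -
  define f where "f y = Wp (\<lambda>v. A v + frechet_derivative \<psi> (at y) v)" for y
  have d\<psi>: "(\<psi> has_derivative frechet_derivative \<psi> (at y)) (at y)" for y
    using \<psi> frechet_derivative_works by blast
  have "frechet_derivative (\<psi> \<circ> T) (at x) = frechet_derivative \<psi> (at (T x)) \<circ> T" for x
    using diff_chain_at[OF linear_imp_has_derivative[OF T(1)] d\<psi>] frechet_derivative_at by metis
  moreover have "linear (\<lambda>v. A v + frechet_derivative \<psi> (at y) v)" for y
    using linear_compose_add[OF A has_derivative_linear[OF d\<psi>]] by blast
  ultimately have pullback: "Wq (\<lambda>v. (A \<circ> T) v + frechet_derivative (\<psi> \<circ> T) (at x) v) = f (T x)" for x
    using W unfolding f_def by (simp add: o_def)
  have "det (matrix T) \<noteq> 0"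
    using T det_nz_iff_inj by blast
  moreover have "integral (T ` D) f = \<bar>det (matrix T)\<bar> * integral D (f \<circ> T)"
    by (rule integral_linear_image_nonneg[OF T(1)]) (simp add: f_def W_nonneg)
  ultimately have "integral D (f \<circ> T) / measure lebesgue D = integral (T ` D) f / measure lebesgue (T ` D)"
    using measure_linear_image[OF T(1) D] by simp
  then show ?thesis
    unfolding pullback by (simp add: f_def[abs_def] o_def)
qed

definition test_function :: "(real^2) set \<Rightarrow> (real^2 \<Rightarrow> real^2) \<Rightarrow> bool" where
  "test_function D \<psi> \<longleftrightarrow> smooth_on UNIV \<psi> \<and>
     compact (closure {x. \<psi> x \<noteq> 0}) \<and> closure {x. \<psi> x \<noteq> 0} \<subseteq> D"

lemma QWdens_eq_Inf:
  "QWdens \<Phi> \<Psi> G a b c p A = Inf {integral {x. gmet G p x x < 1}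
       (\<lambda>x. Wdens \<Phi> \<Psi> G a b c p (\<lambda>v. A v + frechet_derivative \<psi> (at x) v))
       / measure lebesgue {x. gmet G p x x < 1} | \<psi>. test_function {x. gmet G p x x < 1} \<psi>}"
  unfolding QWdens_def test_function_def Let_def ..

lemma test_function_compose_linear:
  assumes "test_function D \<psi>" and S: "linear S" "linear Si" "\<And>x. S (Si x) = x" "\<And>x. Si (S x) = x"
  shows "test_function (Si ` D) (\<psi> \<circ> S)"
proof -
  have "{x. (\<psi> \<circ> S) x \<noteq> 0} = Si ` {x. \<psi> x \<noteq> 0}"
    using S(3,4) by (auto simp: image_iff) metis
  moreover have "inj Si"
    by (metis S(3) injI)
  ultimately have "closure {x. (\<psi> \<circ> S) x \<noteq> 0} = Si ` closure {x. \<psi> x \<noteq> 0}"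
    using closure_injective_linear_image[OF S(2)] by simp
  moreover have "continuous_on UNIV Si"
    using S(2) linear_continuous_on linear_conv_bounded_linear by blast
  ultimately show ?thesis
    using assms(1) smooth_on_compose_linear[OF _ S(1)] compact_continuous_image[OF continuous_on_subset]
    unfolding test_function_def by (metis image_mono subset_UNIV)
qed

lemma QWdens_linear_pullback:
  fixes T Ti A :: "real^2 \<Rightarrow> real^2"
  assumes T: "linear T" "linear Ti" "\<And>x. T (Ti x) = x" "\<And>x. Ti (T x) = x"
    and iso: "\<And>x. gmet G p (T x) (T x) = gmet G q x x"
    and W: "\<And>B. linear B \<Longrightarrow> Wdens \<Phi> \<Psi> G a b c p B = Wdens \<Phi> \<Psi> G a b c q (B \<circ> T)"
    and W_nonneg: "\<And>B. Wdens \<Phi> \<Psi> G a b c p B \<ge> 0"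
    and Dq: "{x. gmet G q x x < 1} \<in> lmeasurable" and A: "linear A"
  shows "QWdens \<Phi> \<Psi> G a b c p A = QWdens \<Phi> \<Psi> G a b c q (A \<circ> T)"
proof -
  define Dp where "Dp = {x. gmet G p x x < 1}"
  define Dq where "Dq = {x. gmet G q x x < 1}"
  have mem: "x \<in> Dq \<longleftrightarrow> T x \<in> Dp" for x
    by (simp add: Dp_def Dq_def iso)
  have Dp_image: "Dp = T ` Dq"
  proof (intro equalityI subsetI)
    fix y assume "y \<in> Dp"
    then show "y \<in> T ` Dq"
      using mem[of "Ti y"] T(3) by (metis image_eqI)
  qed (use mem in auto)
  have Dq_image: "Dq = Ti ` Dp"
  proof (intro equalityI subsetI)
    fix x assume "x \<in> Dq"
    then show "x \<in> Ti ` Dp"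
      using mem T(4) by (metis image_eqI)
  qed (use mem T(3) in auto)
  define Vp where "Vp \<psi> = integral Dp (\<lambda>x. Wdens \<Phi> \<Psi> G a b c p (\<lambda>v. A v + frechet_derivative \<psi> (at x) v))
      / measure lebesgue Dp" for \<psi>
  define Vq where "Vq \<psi> = integral Dq (\<lambda>x. Wdens \<Phi> \<Psi> G a b c q (\<lambda>v. (A \<circ> T) v + frechet_derivative \<psi> (at x) v))
      / measure lebesgue Dq" for \<psi>
  have "inj T"
    by (metis T(4) injI)
  have V_pullback: "Vq (\<psi> \<circ> T) = Vp \<psi>" if "test_function Dp \<psi>" for \<psi>
  proof -
    have "\<psi> differentiable at x" for x
      using that smooth_on_UNIV_differentiable unfolding test_function_def by blast
    from average_linear_pullback[where Wp="Wdens \<Phi> \<Psi> G a b c p" and Wq="Wdens \<Phi> \<Psi> G a b c q",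
        OF T(1) \<open>inj T\<close> W W_nonneg Dq[folded Dq_def] A this]
    show ?thesis
      unfolding Vp_def Vq_def Dp_image .
  qed
  have "{Vp \<psi> | \<psi>. test_function Dp \<psi>} = {Vq \<psi> | \<psi>. test_function Dq \<psi>}"
  proof (intro equalityI subsetI)
    fix z assume "z \<in> {Vp \<psi> | \<psi>. test_function Dp \<psi>}"
    then obtain \<psi> where z: "z = Vp \<psi>" and \<psi>: "test_function Dp \<psi>" by blast
    have "test_function Dq (\<psi> \<circ> T)"
      using test_function_compose_linear[OF \<psi> T] Dq_image by simp
    moreover have "z = Vq (\<psi> \<circ> T)"
      using V_pullback[OF \<psi>] z by simp
    ultimately show "z \<in> {Vq \<psi> | \<psi>. test_function Dq \<psi>}" by blast
  next
    fix z assume "z \<in> {Vq \<psi> | \<psi>. test_function Dq \<psi>}"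
    then obtain \<psi> where z: "z = Vq \<psi>" and \<psi>: "test_function Dq \<psi>" by blast
    have "test_function Dp (\<psi> \<circ> Ti)"
      using test_function_compose_linear[OF \<psi> T(2,1,4,3)] Dp_image by simp
    moreover have "(\<psi> \<circ> Ti) \<circ> T = \<psi>"
      using T(4) by (simp add: o_def)
    ultimately have "z = Vp (\<psi> \<circ> Ti)"
      using V_pullback z by metis
    with \<open>test_function Dp (\<psi> \<circ> Ti)\<close> show "z \<in> {Vp \<psi> | \<psi>. test_function Dp \<psi>}"
      by blast
  qed
  then show ?thesis
    unfolding QWdens_eq_Inf Vp_def Vq_def Dp_def Dq_def by simp
qed

lemma QWdens_conformal_transport:
  assumes G: "riemannian_metric M G" and \<Phi>: "\<forall>r\<ge>0. \<Phi> r \<ge> 0" and \<Psi>: "\<forall>x. \<Psi> x \<ge> 0"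
    and conf: "conformal M G \<Gamma> \<phi>"
    and a: "parallel_field M \<Gamma> a" and b: "parallel_field M \<Gamma> b" and c: "parallel_field M \<Gamma> c"
    and sum0: "\<forall>x\<in>M. a x + b x + c x = 0" and p: "p \<in> M" and q: "q \<in> M"
    and ab: "det2 (a p) (b p) \<noteq> 0" "det2 (a q) (b q) \<noteq> 0" and A: "linear A"
  shows "QWdens \<Phi> \<Psi> G a b c p A = QWdens \<Phi> \<Psi> G a b c q (A \<circ> conformal_transport \<phi> a b p q)"
proof (rule QWdens_linear_pullback)
  have "\<phi> p \<noteq> 0" "\<phi> q \<noteq> 0"
    using conf p q unfolding conformal_def by fastforce+
  then show "conformal_transport \<phi> a b p q (conformal_transport \<phi> a b q p x) = x"
    and "conformal_transport \<phi> a b q p (conformal_transport \<phi> a b p q x) = x" for x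
    using conformal_transport_inverse ab by blast+
  show "Wdens \<Phi> \<Psi> G a b c p B = Wdens \<Phi> \<Psi> G a b c q (B \<circ> conformal_transport \<phi> a b p q)"
    if "linear B" for B
    by (rule Wdens_conformal_transport[OF conf a b c sum0 p q ab(2) that])
  show "Wdens \<Phi> \<Psi> G a b c p B \<ge> 0" for B
    using Wdens_nonneg[OF \<Phi> \<Psi> riemannian_metric_gmet_nonneg[OF G p]] .
  show "{x. gmet G q x x < 1} \<in> lmeasurable"
    using G q unfolding riemannian_metric_def by (intro gmet_unit_disc_lmeasurable) blast
  show "gmet G p (conformal_transport \<phi> a b p q x) (conformal_transport \<phi> a b p q x) = gmet G q x x" for x
    by (rule conformal_transport_isometry[OF conf a b p q ab(2)])
qed (rule conformal_transport_linear A)+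

theorem proposition5p5:
  fixes M :: "(real^2) set" and G :: "real^2 \<Rightarrow> real^2^2" and \<Gamma> :: "real^2 \<Rightarrow> real^2^2^2"
    and a b c :: "real^2 \<Rightarrow> real^2" and \<phi> :: "real^2 \<Rightarrow> real"
    and \<Phi> \<Psi> :: "real \<Rightarrow> real"
    and \<alpha>\<Phi> C\<Phi> L\<Phi> \<alpha>\<Psi> C\<Psi> L\<Psi> :: real
  assumes M: "smooth_disc M"
    and G: "riemannian_metric M G"
    and conn: "flat_symmetric_connection M \<Gamma>"
    and par: "parallel_field M \<Gamma> a" "parallel_field M \<Gamma> b" "parallel_field M \<Gamma> c"
    and sum0: "\<forall>p\<in>M. a p + b p + c p = 0"
    and indep: "\<forall>p\<in>M. det2 (a p) (b p) \<noteq> 0 \<and> det2 (b p) (c p) \<noteq> 0 \<and> det2 (a p) (c p) \<noteq> 0"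
    and pos_consts: "\<alpha>\<Phi> > 0" "C\<Phi> > 0" "L\<Phi> > 0" "\<alpha>\<Psi> > 0" "C\<Psi> > 0" "L\<Psi> > 0"
    and Phi_nonneg: "\<forall>r\<ge>0. \<Phi> r \<ge> 0"
    and Phi_zero: "\<forall>r\<ge>0. \<Phi> r = 0 \<longleftrightarrow> r = 1"
    and Phi_lower: "\<forall>r\<ge>0. \<Phi> r \<ge> \<alpha>\<Phi> * (r - 1)\<^sup>2"
    and Phi_upper: "\<forall>r\<ge>0. \<Phi> r \<le> C\<Phi> * (1 + r\<^sup>2)"
    and Phi_lip: "\<forall>r>0. \<forall>s>0. \<bar>\<Phi> r - \<Phi> s\<bar> \<le> L\<Phi> * (1 + \<bar>r\<bar> + \<bar>s\<bar>) * \<bar>r - s\<bar>"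
    and Psi_nonneg: "\<forall>x. \<Psi> x \<ge> 0"
    and Psi_zero: "\<forall>x. \<Psi> x = 0 \<longleftrightarrow> x = 1"
    and Psi_neg: "\<forall>x<0. \<Psi> x > \<alpha>\<Psi> * sqrt \<bar>x\<bar>"
    and Psi_upper: "\<forall>x. \<Psi> x < C\<Psi> * (1 + \<bar>x\<bar>)"
    and Psi_lip: "\<forall>x y. \<bar>\<Psi> x - \<Psi> y\<bar> \<le> L\<Psi> * \<bar>x - y\<bar>"
    and phi_smooth: "smooth_on M \<phi>"
    and conf: "conformal M G \<Gamma> \<phi>"
  shows "\<forall>p\<in>M. \<forall>q\<in>M. \<forall>\<gamma> \<gamma>'. C1_path_in M \<gamma> \<gamma>' \<and> \<gamma> 0 = q \<and> \<gamma> 1 = p \<longrightarrow>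
           (\<forall>A :: real^2 \<Rightarrow> real^2. linear A \<longrightarrow>
              Wdens \<Phi> \<Psi> G a b c p A = Wdens \<Phi> \<Psi> G a b c q (A \<circ> tilde_transport M \<Gamma> \<phi> \<gamma> \<gamma>')
            \<and> QWdens \<Phi> \<Psi> G a b c p A = QWdens \<Phi> \<Psi> G a b c q (A \<circ> tilde_transport M \<Gamma> \<phi> \<gamma> \<gamma>'))"
proof (intro ballI allI impI conjI)
  fix p q \<gamma> \<gamma>' and A :: "real^2 \<Rightarrow> real^2"
  assume p: "p \<in> M" and q: "q \<in> M" and \<gamma>: "C1_path_in M \<gamma> \<gamma>' \<and> \<gamma> 0 = q \<and> \<gamma> 1 = p"
    and A: "linear A"
  have \<phi>_pos: "\<forall>x\<in>M. \<phi> x > 0"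
    using conf unfolding conformal_def by blast
  have ab: "\<forall>x\<in>M. det2 (a x) (b x) \<noteq> 0"
    using indep by blast
  have transport: "tilde_transport M \<Gamma> \<phi> \<gamma> \<gamma>' = conformal_transport \<phi> a b p q"
    using tilde_transport_eq_conformal_transport[OF par(1,2) ab phi_smooth \<phi>_pos] \<gamma> by blast
  show "Wdens \<Phi> \<Psi> G a b c p A = Wdens \<Phi> \<Psi> G a b c q (A \<circ> tilde_transport M \<Gamma> \<phi> \<gamma> \<gamma>')"
    unfolding transport using Wdens_conformal_transport[OF conf par sum0 p q _ A] ab q by blast
  show "QWdens \<Phi> \<Psi> G a b c p A = QWdens \<Phi> \<Psi> G a b c q (A \<circ> tilde_transport M \<Gamma> \<phi> \<gamma> \<gamma>')"
    unfolding transport using QWdens_conformal_transport[OF G Phi_nonneg Psi_nonneg conf par sum0 p q _ _ A] ab p q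
    by blast
qed

end
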